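(* Let $(G,u,v)$ be a twice-marked graph and $D$ a submodular divisor on $G$. Then $\mathrm{sci}(\tau^{u,v}_D)=|\lambda(D,v)|$.
   Context: A graph is a finite, connected, loopless multigraph (parallel edges allowed); its genus is $g=|E(G)|-|V(G)|+1$. A divisor is an element of the free abelian group on $V(G)$. Linear equivalence is generated by chip-firing (firing $w$ subtracts $\mathrm{val}(w)$ chips from $w$ and adds to each other vertex the number of edges joining it to $w$). The rank $r(D)$ is $-1$ if $D$ is not equivalent to an effective divisor, else the largest $r\ge0$ such that $D-E$ is equivalent to an effective divisor for every effective $E$ of degree $r$. $\delta(P)$ is $1$ if $P$ holds and $0$ otherwise. A twice-marked graph $(G,u,v)$ is a graph with two chosen vertices. A twist of $D$ is $D+au+bv$. $\Delta(D)=r(D)-r(D-u)-r(D-v)+r(D-u-v)$. $D$ is submodular if $\Delta(D')\ge0$ for all twists $D'$. If $D$ is submodular, its transmission permutation $\tau^{u,v}_D$ is the unique bijection $\mathbb Z\to\mathbb Z$ with $\delta(\tau^{u,v}_D(b)=a)=\Delta(D+au-bv)$ for all $a,b$. For a bijection $\alpha:\mathbb Z\to\mathbb Z$, a sign-changing inversion is a pair $(x,y)\in\mathbb Z^2$ with $x<y$ and $\alpha(x)>0\ge\alpha(y)$; $\mathrm{sci}(\alpha)$ is their number. For a vertex $v$ and divisor $D$ on a genus-$g$ graph, $s_i(D,v)=\min\{\ell\in\mathbb Z: r(D+\ell v)\ge i\}$ and $\lambda_i(D,v)=i-s_i(D,v)+g-\deg D$ for $i\ge0$; the Weierstrass partition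 $\lambda(D,v)=(\lambda_0,\lambda_1,\dots)$ is a nonincreasing sequence of nonnegative integers, finitely many nonzero, and $|\lambda(D,v)|=\sum_i\lambda_i(D,v)$. *)

theory Defs
  imports Main
begin

definition graph :: "'v set \<Rightarrow> ('v \<Rightarrow> 'v \<Rightarrow> nat) \<Rightarrow> bool" where
  "graph V m \<longleftrightarrow> finite V \<and> V \<noteq> {} \<and> (\<forall>x y. m x y = m y x) \<and> (\<forall>x. m x x = 0)
     \<and> (\<forall>x y. 0 < m x y \<longrightarrow> x \<in> V \<and> y \<in> V)
     \<and> (\<forall>x\<in>V. \<forall>y\<in>V. (x, y) \<in> {(a, b). 0 < m a b}\<^sup>*)"

definition num_edges :: "'v set \<Rightarrow> ('v \<Rightarrow> 'v \<Rightarrow> nat) \<Rightarrow> nat" where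
  "num_edges V m = (\<Sum>x\<in>V. \<Sum>y\<in>V. m x y) div 2"

definition genus :: "'v set \<Rightarrow> ('v \<Rightarrow> 'v \<Rightarrow> nat) \<Rightarrow> int" where
  "genus V m = int (num_edges V m) - int (card V) + 1"

definition divisor :: "'v set \<Rightarrow> ('v \<Rightarrow> int) \<Rightarrow> bool" where
  "divisor V D \<longleftrightarrow> (\<forall>x. x \<notin> V \<longrightarrow> D x = 0)"

definition deg :: "'v set \<Rightarrow> ('v \<Rightarrow> int) \<Rightarrow> int" where
  "deg V D = (\<Sum>x\<in>V. D x)"

definition effective :: "('v \<Rightarrow> int) \<Rightarrow> bool" where
  "effective D \<longleftrightarrow> (\<forall>x. 0 \<le> D x)"

definition vtx :: "'v \<Rightarrow> 'v \<Rightarrow> int" where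
  "vtx w = (\<lambda>x. if x = w then 1 else 0)"

text \<open>Laplacian: firing each vertex w exactly f w times (negative = reverse firing)
  subtracts lap f from the divisor.\<close>
definition lap :: "'v set \<Rightarrow> ('v \<Rightarrow> 'v \<Rightarrow> nat) \<Rightarrow> ('v \<Rightarrow> int) \<Rightarrow> 'v \<Rightarrow> int" where
  "lap V m f = (\<lambda>x. if x \<in> V then (\<Sum>y\<in>V. int (m x y) * (f x - f y)) else 0)"

definition lin_equiv :: "'v set \<Rightarrow> ('v \<Rightarrow> 'v \<Rightarrow> nat) \<Rightarrow> ('v \<Rightarrow> int) \<Rightarrow> ('v \<Rightarrow> int) \<Rightarrow> bool" where
  "lin_equiv V m D D' \<longleftrightarrow> (\<exists>f. \<forall>x. D' x = D x - lap V m f x)"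

definition equiv_eff :: "'v set \<Rightarrow> ('v \<Rightarrow> 'v \<Rightarrow> nat) \<Rightarrow> ('v \<Rightarrow> int) \<Rightarrow> bool" where
  "equiv_eff V m D \<longleftrightarrow> (\<exists>F. divisor V F \<and> effective F \<and> lin_equiv V m D F)"

definition rank :: "'v set \<Rightarrow> ('v \<Rightarrow> 'v \<Rightarrow> nat) \<Rightarrow> ('v \<Rightarrow> int) \<Rightarrow> int" where
  "rank V m D = (if \<not> equiv_eff V m D then -1 else
     (GREATEST r::int. 0 \<le> r \<and> (\<forall>E. divisor V E \<and> effective E \<and> deg V E = r
         \<longrightarrow> equiv_eff V m (\<lambda>x. D x - E x))))"

definition twist :: "('v \<Rightarrow> int) \<Rightarrow> 'v \<Rightarrow> 'v \<Rightarrow> int \<Rightarrow> int \<Rightarrow> 'v \<Rightarrow> int" where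
  "twist D u v a b = (\<lambda>x. D x + a * vtx u x + b * vtx v x)"

definition Delta :: "'v set \<Rightarrow> ('v \<Rightarrow> 'v \<Rightarrow> nat) \<Rightarrow> 'v \<Rightarrow> 'v \<Rightarrow> ('v \<Rightarrow> int) \<Rightarrow> int" where
  "Delta V m u v D = rank V m D - rank V m (twist D u v (-1) 0)
     - rank V m (twist D u v 0 (-1)) + rank V m (twist D u v (-1) (-1))"

definition submodular :: "'v set \<Rightarrow> ('v \<Rightarrow> 'v \<Rightarrow> nat) \<Rightarrow> 'v \<Rightarrow> 'v \<Rightarrow> ('v \<Rightarrow> int) \<Rightarrow> bool" where
  "submodular V m u v D \<longleftrightarrow> (\<forall>a b. 0 \<le> Delta V m u v (twist D u v a b))"

definition transmission_perm ::
  "'v set \<Rightarrow> ('v \<Rightarrow> 'v \<Rightarrow> nat) \<Rightarrow> 'v \<Rightarrow> 'v \<Rightarrow> ('v \<Rightarrow> int) \<Rightarrow> int \<Rightarrow> int" where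
  "transmission_perm V m u v D = (THE \<tau>. bij \<tau> \<and>
     (\<forall>a b. Delta V m u v (twist D u v a (- b)) = (if \<tau> b = a then 1 else 0)))"

definition sci_pairs :: "(int \<Rightarrow> int) \<Rightarrow> (int \<times> int) set" where
  "sci_pairs \<alpha> = {(x, y). x < y \<and> 0 < \<alpha> x \<and> \<alpha> y \<le> 0}"

definition sci :: "(int \<Rightarrow> int) \<Rightarrow> nat" where
  "sci \<alpha> = card (sci_pairs \<alpha>)"

definition s_seq :: "'v set \<Rightarrow> ('v \<Rightarrow> 'v \<Rightarrow> nat) \<Rightarrow> ('v \<Rightarrow> int) \<Rightarrow> 'v \<Rightarrow> nat \<Rightarrow> int" where
  "s_seq V m D v i = (LEAST l::int. int i \<le> rank V m (\<lambda>x. D x + l * vtx v x))"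

definition wlambda :: "'v set \<Rightarrow> ('v \<Rightarrow> 'v \<Rightarrow> nat) \<Rightarrow> ('v \<Rightarrow> int) \<Rightarrow> 'v \<Rightarrow> nat \<Rightarrow> int" where
  "wlambda V m D v i = int i - s_seq V m D v i + genus V m - deg V D"

definition wsize :: "'v set \<Rightarrow> ('v \<Rightarrow> 'v \<Rightarrow> nat) \<Rightarrow> ('v \<Rightarrow> int) \<Rightarrow> 'v \<Rightarrow> int" where
  "wsize V m D v = (\<Sum>i\<in>{i. wlambda V m D v i \<noteq> 0}. wlambda V m D v i)"

end

theory Submission
  imports Defs
begin

text \<open>
  Riemann--Roch is only needed in two crude forms: \<open>r(D) = -1\<close> if \<open>deg D < 0\<close>, and
  \<open>r(D) = deg D - g\<close> if \<open>deg D \<ge> 2g\<close>. The latter follows because every divisor of degree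
  \<open>\<ge> g\<close> is equivalent to an effective one (reduce it at a vertex \<open>q\<close> and run Dhar's burning
  algorithm), while the divisor of an acyclic orientation minus one chip per vertex has degree
  \<open>g - 1\<close> and is not. Hence the array \<open>R(a,b) = r(D + a u - b v)\<close> is affine off a diagonal
  band, so the mixed differences \<open>\<Delta>\<close> telescope to row and column sums \<open>1\<close>; being \<open>\<ge> 0\<close>,
  they form the permutation matrix of \<open>\<tau>\<close>. Consequently \<open>\<rho>(b) = r(D - b v)\<close> drops by one
  exactly at the \<open>b\<close> with \<open>\<tau> b \<le> 0\<close>, and \<open>-s_i(D,v)\<close> is the drop from \<open>i\<close> to \<open>i - 1\<close>.
  Counting the \<open>x < b\<close> with \<open>\<tau> x > 0\<close> shows that \<open>\<lambda>_i(D,v)\<close> is the number of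
  sign-changing inversions \<open>(x, -s_i)\<close>, and summing over \<open>i\<close> gives the theorem.
\<close>

section \<open>Chip-firing\<close>

lemma graph_finite: "graph V m \<Longrightarrow> finite V"
  and graph_nonempty: "graph V m \<Longrightarrow> V \<noteq> {}"
  and graph_sym: "graph V m \<Longrightarrow> m x y = m y x"
  and graph_loopless: "graph V m \<Longrightarrow> m x x = 0"
  and graph_edge_in: "graph V m \<Longrightarrow> 0 < m x y \<Longrightarrow> y \<in> V"
  and graph_connected: "graph V m \<Longrightarrow> x \<in> V \<Longrightarrow> y \<in> V \<Longrightarrow> (x, y) \<in> {(a, b). 0 < m a b}\<^sup>*"
  unfolding graph_def by blast+

lemma obtain_max_point:
  fixes f :: "'a \<Rightarrow> 'b::linorder"
  assumes "finite A" "A \<noteq> {}"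
  obtains x where "x \<in> A" "\<And>y. y \<in> A \<Longrightarrow> f y \<le> f x"
  using obtains_MAX[OF assms, of f] by (metis Max_ge finite_imageI imageI assms(1))

lemma lap_add: "lap V m (\<lambda>x. f x + g x) x = lap V m f x + lap V m g x"
  unfolding lap_def by (auto simp: sum.distrib[symmetric] algebra_simps)

lemma lap_scale: "lap V m (\<lambda>x. c * f x) x = c * lap V m f x"
  unfolding lap_def by (auto simp: sum_distrib_left algebra_simps)

lemma lap_uminus: "lap V m (\<lambda>x. - f x) x = - lap V m f x"
  using lap_scale[of V m "-1" f x] by simp

lemma lap_diff: "lap V m (\<lambda>x. f x - g x) x = lap V m f x - lap V m g x"
  using lap_add[of V m f "\<lambda>x. - g x" x] lap_uminus[of V m g x] by simp

lemma lap_zero: "lap V m (\<lambda>x. 0) x = 0"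
  unfolding lap_def by simp

lemma lap_outside: "x \<notin> V \<Longrightarrow> lap V m f x = 0"
  unfolding lap_def by simp

lemma sum_lap_eq_0:
  assumes G: "graph V m"
  shows "(\<Sum>x\<in>V. lap V m f x) = 0"
proof -
  have "(\<Sum>x\<in>V. lap V m f x)
      = (\<Sum>x\<in>V. \<Sum>y\<in>V. int (m x y) * f x) - (\<Sum>x\<in>V. \<Sum>y\<in>V. int (m x y) * f y)"
    unfolding lap_def by (simp add: sum_subtractf[symmetric] algebra_simps)
  also have "(\<Sum>x\<in>V. \<Sum>y\<in>V. int (m x y) * f y) = (\<Sum>y\<in>V. \<Sum>x\<in>V. int (m x y) * f y)"
    by (rule sum.swap)
  also have "\<dots> = (\<Sum>x\<in>V. \<Sum>y\<in>V. int (m x y) * f x)"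
    using graph_sym[OF G] by simp
  finally show ?thesis by simp
qed

lemma deg_add: "deg V (\<lambda>x. D x + E x) = deg V D + deg V E"
  unfolding deg_def by (simp add: sum.distrib)

lemma deg_diff: "deg V (\<lambda>x. D x - E x) = deg V D - deg V E"
  unfolding deg_def by (simp add: sum_subtractf)

lemma deg_twist:
  assumes "finite V" "u \<in> V" "v \<in> V"
  shows "deg V (twist D u v a b) = deg V D + a + b"
  using assms unfolding twist_def deg_def vtx_def by (simp add: sum.distrib sum_distrib_left[symmetric])

lemma divisor_diff: "divisor V D \<Longrightarrow> divisor V E \<Longrightarrow> divisor V (\<lambda>x. D x - E x)"
  unfolding divisor_def by simp

lemma divisor_twist: "divisor V D \<Longrightarrow> u \<in> V \<Longrightarrow> v \<in> V \<Longrightarrow> divisor V (twist D u v a b)"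
  unfolding divisor_def twist_def vtx_def by auto

lemma twist_twist: "twist (twist D u v a b) u v a' b' = twist D u v (a + a') (b + b')"
  unfolding twist_def by (auto simp: algebra_simps)

lemma lin_equiv_refl: "lin_equiv V m D D"
  unfolding lin_equiv_def using lap_zero by (intro exI[of _ "\<lambda>x. 0"]) auto

lemma lin_equiv_trans: "lin_equiv V m D D' \<Longrightarrow> lin_equiv V m D' D'' \<Longrightarrow> lin_equiv V m D D''"
  unfolding lin_equiv_def
proof (elim exE)
  fix f g assume "\<forall>x. D' x = D x - lap V m f x" "\<forall>x. D'' x = D' x - lap V m g x"
  then show "\<exists>f. \<forall>x. D'' x = D x - lap V m f x"
    by (intro exI[of _ "\<lambda>x. f x + g x"]) (simp add: lap_add)
qed

lemma lin_equiv_firing: "lin_equiv V m D (\<lambda>x. D x - lap V m f x)"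
  unfolding lin_equiv_def by blast

lemma lin_equiv_deg:
  assumes "graph V m" "lin_equiv V m D D'"
  shows "deg V D' = deg V D"
proof -
  obtain f where "\<And>x. D' x = D x - lap V m f x" using assms(2) unfolding lin_equiv_def by blast
  then show ?thesis unfolding deg_def by (simp add: sum_subtractf sum_lap_eq_0[OF assms(1)])
qed

lemma lin_equiv_divisor: "divisor V D \<Longrightarrow> lin_equiv V m D D' \<Longrightarrow> divisor V D'"
  unfolding lin_equiv_def divisor_def by (auto simp: lap_outside)

lemma deg_nonneg_if_equiv_eff:
  assumes "graph V m" "equiv_eff V m D"
  shows "0 \<le> deg V D"
proof -
  obtain F where "effective F" "lin_equiv V m D F" using assms(2) unfolding equiv_eff_def by blast
  then show ?thesis
    using lin_equiv_deg[OF assms(1)] unfolding effective_def deg_def by (metis sum_nonneg)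
qed

lemma equiv_eff_if_lin_equiv: "lin_equiv V m D D' \<Longrightarrow> equiv_eff V m D' \<Longrightarrow> equiv_eff V m D"
  unfolding equiv_eff_def using lin_equiv_trans by blast

lemma equiv_eff_add_effective:
  assumes "equiv_eff V m D" "divisor V E" "effective E"
  shows "equiv_eff V m (\<lambda>x. D x + E x)"
proof -
  obtain F f where F: "divisor V F" "effective F" "\<And>x. F x = D x - lap V m f x"
    using assms(1) unfolding equiv_eff_def lin_equiv_def by blast
  show ?thesis
    unfolding equiv_eff_def lin_equiv_def
    using F assms(2,3) by (intro exI[of _ "\<lambda>x. F x + E x"]) (auto simp: divisor_def effective_def)
qed

lemma exists_edge_leaving:
  assumes G: "graph V m" and A: "A \<subseteq> V" "A \<noteq> {}" "A \<noteq> V"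
  shows "\<exists>x\<in>A. \<exists>y\<in>V - A. 0 < m x y"
proof -
  obtain b c where b: "b \<in> A" and c: "c \<in> V" "c \<notin> A" using A by blast
  have "(b, c) \<in> {(a, b). 0 < m a b}\<^sup>*" using graph_connected[OF G] b c A(1) by blast
  then have "c \<notin> A \<longrightarrow> (\<exists>x\<in>A. \<exists>y. y \<notin> A \<and> 0 < m x y)"
    by (induction rule: rtrancl_induct) (use b in auto)
  then show ?thesis using c graph_edge_in[OF G] by blast
qed

definition out_weight :: "'v set \<Rightarrow> ('v \<Rightarrow> 'v \<Rightarrow> nat) \<Rightarrow> 'v set \<Rightarrow> 'v \<Rightarrow> int" where
  "out_weight V m A x = (\<Sum>y\<in>V - A. int (m x y))"

lemma out_weight_pos:
  assumes G: "graph V m" and A: "A \<subseteq> V" "A \<noteq> {}" "A \<noteq> V"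
  shows "\<exists>x\<in>A. 0 < out_weight V m A x"
proof -
  obtain x y where xy: "x \<in> A" "y \<in> V - A" "0 < m x y"
    using exists_edge_leaving[OF G A] by blast
  have "int (m x y) \<le> out_weight V m A x"
    unfolding out_weight_def by (rule member_le_sum) (use xy graph_finite[OF G] in auto)
  then show ?thesis using xy by force
qed

lemma out_weight_le_lap_at_max:
  assumes "finite V" "x \<in> V" "\<And>y. y \<in> V \<Longrightarrow> f y \<le> f x"
  shows "out_weight V m {y \<in> V. f y = f x} x \<le> lap V m f x"
proof -
  have "out_weight V m {y \<in> V. f y = f x} x = (\<Sum>y\<in>V. if f y = f x then 0 else int (m x y))"
    unfolding out_weight_def using assms(1) by (auto simp: sum.If_cases intro!: sum.cong)
  also have "\<dots> \<le> (\<Sum>y\<in>V. int (m x y) * (f x - f y))"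
  proof (rule sum_mono)
    fix y assume "y \<in> V"
    then show "(if f y = f x then 0 else int (m x y)) \<le> int (m x y) * (f x - f y)"
      using assms(3)[of y] by (auto simp: mult_le_cancel_left1)
  qed
  finally show ?thesis unfolding lap_def using assms(2) by simp
qed

lemma lap_indicator:
  assumes "A \<subseteq> V" "finite V"
  shows "x \<in> A \<Longrightarrow> lap V m (\<lambda>y. if y \<in> A then 1 else 0) x = out_weight V m A x"
    and "x \<in> V - A \<Longrightarrow> lap V m (\<lambda>y. if y \<in> A then 1 else 0) x \<le> 0"
proof -
  assume x: "x \<in> A"
  have "lap V m (\<lambda>y. if y \<in> A then 1 else 0) x = (\<Sum>y\<in>V. if y \<in> A then 0 else int (m x y))"
    unfolding lap_def using x assms(1) by (auto intro!: sum.cong)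
  then show "lap V m (\<lambda>y. if y \<in> A then 1 else 0) x = out_weight V m A x"
    unfolding out_weight_def using assms(2) by (simp add: sum.If_cases Diff_eq)
next
  assume "x \<in> V - A"
  then show "lap V m (\<lambda>y. if y \<in> A then 1 else 0) x \<le> 0"
    unfolding lap_def by (auto intro!: sum_nonpos)
qed

lemma set_firing_keeps_nonneg:
  assumes "finite V" "A \<subseteq> V" "x \<in> V"
    and "x \<in> A \<Longrightarrow> out_weight V m A x \<le> H x" and "x \<notin> A \<Longrightarrow> 0 \<le> H x"
  shows "0 \<le> H x - lap V m (\<lambda>y. if y \<in> A then 1 else 0) x"
proof (cases "x \<in> A")
  case True
  then show ?thesis using lap_indicator(1)[OF assms(2,1) True] assms(4) by simp
next
  case False
  then have "lap V m (\<lambda>y. if y \<in> A then 1 else 0) x \<le> 0"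
    using lap_indicator(2)[OF assms(2,1), where x = x and m = m] assms(3) by blast
  then show ?thesis using assms(5) False by simp
qed

lemma harmonic_imp_const:
  assumes G: "graph V m" and harmonic: "\<And>x. x \<in> V \<Longrightarrow> lap V m f x = 0"
    and "x \<in> V" "y \<in> V"
  shows "f x = f y"
proof -
  have fin: "finite V" using graph_finite[OF G] .
  obtain z where z: "z \<in> V" "\<And>y. y \<in> V \<Longrightarrow> f y \<le> f z"
    using obtain_max_point[OF fin graph_nonempty[OF G]] by blast
  let ?A = "{y \<in> V. f y = f z}"
  have "?A = V"
  proof (rule ccontr)
    assume "?A \<noteq> V"
    then obtain w where w: "w \<in> ?A" "0 < out_weight V m ?A w"
      using out_weight_pos[OF G, of ?A] z(1) by blast
    have fw: "f w = f z" using w(1) by simp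
    have "out_weight V m {y \<in> V. f y = f w} w \<le> lap V m f w"
      by (rule out_weight_le_lap_at_max[OF fin]) (use w(1) z fw in auto)
    then show False using w harmonic fw by auto
  qed
  then show ?thesis using assms(3,4) by (metis (mono_tags, lifting) mem_Collect_eq)
qed

section \<open>Riemann--Roch in low and high degree\<close>

lemma lin_equiv_nonneg_outside_shrink:
  assumes G: "graph V m" and B: "B \<subseteq> V"
    and nonneg: "\<And>D. \<exists>D'. lin_equiv V m D D' \<and>
      (\<forall>x\<in>V - (B \<union> {x\<in>V - B. \<exists>y\<in>B. 0 < m x y}). 0 \<le> D' x)"
  shows "\<exists>D'. lin_equiv V m D D' \<and> (\<forall>x\<in>V - B. 0 \<le> D' x)"
proof -
  have fin: "finite V" using graph_finite[OF G] .
  obtain D1 where D1: "lin_equiv V m D D1"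
    "\<And>x. x \<in> V - (B \<union> {x\<in>V - B. \<exists>y\<in>B. 0 < m x y}) \<Longrightarrow> 0 \<le> D1 x"
    using nonneg by blast
  define K where "K = (\<Sum>x\<in>V. \<bar>D1 x\<bar>)"
  have K: "0 \<le> K" "\<And>x. x \<in> V \<Longrightarrow> \<bar>D1 x\<bar> \<le> K"
    unfolding K_def using fin by (auto simp: sum_nonneg intro!: member_le_sum)
  \<comment> \<open>firing \<open>B\<close> \<open>K\<close> times gives every vertex outside \<open>B\<close> at least \<open>K\<close> chips per edge into \<open>B\<close>\<close>
  define D2 where "D2 = (\<lambda>x. D1 x - lap V m (\<lambda>y. - K * (if y \<in> V - B then 1 else 0)) x)"
  have D2: "D2 x = D1 x + K * (\<Sum>y\<in>B. int (m x y))" if x: "x \<in> V - B" for x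
  proof -
    have "V - (V - B) = B" using B by blast
    then show ?thesis
      unfolding D2_def lap_scale lap_indicator(1)[OF Diff_subset fin x] out_weight_def by simp
  qed
  have "0 \<le> D2 x" if x: "x \<in> V - B" for x
  proof (cases "\<exists>y\<in>B. 0 < m x y")
    case True
    then obtain y where y: "y \<in> B" "0 < m x y" by blast
    have "int (m x y) \<le> (\<Sum>y\<in>B. int (m x y))"
      by (rule member_le_sum) (use y B fin finite_subset in auto)
    then have "K \<le> K * (\<Sum>y\<in>B. int (m x y))"
      using y(2) K(1) by (simp add: mult_le_cancel_left1)
    moreover have "\<bar>D1 x\<bar> \<le> K" using K(2) x by blast
    ultimately show ?thesis using D2[OF x] by linarith
  next
    case False
    then show ?thesis using D1(2)[of x] x D2[OF x] K(1) by (simp add: sum_nonneg)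
  qed
  moreover have "lin_equiv V m D D2"
    unfolding D2_def using D1(1) lin_equiv_firing lin_equiv_trans by blast
  ultimately show ?thesis by blast
qed

lemma lin_equiv_nonneg_outside:
  assumes G: "graph V m" and q: "q \<in> V"
  shows "\<exists>D'. lin_equiv V m D D' \<and> (\<forall>x\<in>V - {q}. 0 \<le> D' x)"
proof -
  have fin: "finite V" using graph_finite[OF G] .
  have "\<exists>D'. lin_equiv V m D D' \<and> (\<forall>x\<in>V - B. 0 \<le> D' x)" if "q \<in> B" "B \<subseteq> V" for B D
    using that
  proof (induction "card (V - B)" arbitrary: B D rule: less_induct)
    case less
    let ?N = "{x\<in>V - B. \<exists>y\<in>B. 0 < m x y}"
    show ?case
    proof (cases "B = V")
      case True
      then show ?thesis using lin_equiv_refl by blast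
    next
      case False
      obtain x y where x: "x \<in> B" "y \<in> V - B" "0 < m x y"
        using exists_edge_leaving[OF G less.prems(2)] less.prems(1) False by blast
      then have "y \<in> ?N" using graph_sym[OF G, of x y] x(1) by auto
      then have "card (V - (B \<union> ?N)) < card (V - B)"
        using fin by (intro psubset_card_mono) auto
      moreover have "q \<in> B \<union> ?N" "B \<union> ?N \<subseteq> V" using less.prems by auto
      ultimately have "\<exists>D'. lin_equiv V m D0 D' \<and> (\<forall>x\<in>V - (B \<union> ?N). 0 \<le> D' x)" for D0
        by (rule less.hyps)
      then show ?thesis by (rule lin_equiv_nonneg_outside_shrink[OF G less.prems(2)])
    qed
  qed
  then show ?thesis using q by blast
qed

definition inner_weight :: "('v \<Rightarrow> 'v \<Rightarrow> nat) \<Rightarrow> 'v set \<Rightarrow> int" where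
  "inner_weight m B = (\<Sum>x\<in>B. \<Sum>y\<in>B. int (m x y))"

lemma inner_weight_insert:
  assumes G: "graph V m" and "finite B" "x \<notin> B"
  shows "inner_weight m (insert x B) = inner_weight m B + 2 * (\<Sum>y\<in>B. int (m x y))"
proof -
  have "inner_weight m (insert x B)
      = (\<Sum>y\<in>B. int (m x y)) + (\<Sum>z\<in>B. int (m z x) + (\<Sum>y\<in>B. int (m z y)))"
    unfolding inner_weight_def using assms graph_loopless[OF G, of x] by simp
  then show ?thesis
    unfolding inner_weight_def using graph_sym[OF G, of _ x] by (simp add: sum.distrib)
qed

lemma inner_weight_eq_twice_num_edges:
  assumes G: "graph V m"
  shows "inner_weight m V = 2 * int (num_edges V m)"
proof -
  have "even (inner_weight m B)" if "finite B" for B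
    using that
  proof (induction B rule: finite_induct)
    case empty
    then show ?case by (simp add: inner_weight_def)
  next
    case (insert x B)
    then show ?case by (simp add: inner_weight_insert[OF G])
  qed
  moreover have sum: "inner_weight m V = int (\<Sum>x\<in>V. \<Sum>y\<in>V. m x y)"
    unfolding inner_weight_def by simp
  ultimately have "even (\<Sum>x\<in>V. \<Sum>y\<in>V. m x y)"
    using graph_finite[OF G] by (metis even_of_nat)
  then show ?thesis unfolding num_edges_def sum by (elim evenE) simp
qed

definition reduced :: "'v set \<Rightarrow> ('v \<Rightarrow> 'v \<Rightarrow> nat) \<Rightarrow> 'v \<Rightarrow> ('v \<Rightarrow> int) \<Rightarrow> bool" where
  "reduced V m q H \<longleftrightarrow> (\<forall>x\<in>V - {q}. 0 \<le> H x)
     \<and> (\<forall>A. A \<subseteq> V - {q} \<longrightarrow> A \<noteq> {} \<longrightarrow> (\<exists>x\<in>A. H x < out_weight V m A x))"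

text \<open>Dhar's burning algorithm: starting from \<open>q\<close>, a reduced divisor lets the fire spread to
  one more vertex \<open>x\<close> at a time, and \<open>H x\<close> is less than the number of edges from \<open>x\<close> to the
  burnt part. Summing over the whole burning order counts every edge once and every vertex
  with \<open>-1\<close>, so \<open>H q < 0\<close> forces \<open>deg H \<le> |E| - |V|\<close>.\<close>
lemma deg_lt_genus_if_reduced:
  assumes G: "graph V m" and q: "q \<in> V" and H: "reduced V m q H" "H q < 0"
  shows "deg V H < genus V m"
proof -
  have fin: "finite V" using graph_finite[OF G] .
  have "\<exists>B. q \<in> B \<and> B \<subseteq> V \<and> card B = Suc k \<and> 2 * (\<Sum>x\<in>B. H x) \<le> inner_weight m B - 2 * int (card B)"
    if "Suc k \<le> card V" for k
    using that
  proof (induction k)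
    case 0
    show ?case using q H(2) by (intro exI[of _ "{q}"]) (simp add: inner_weight_def graph_loopless[OF G])
  next
    case (Suc k)
    then obtain B where B: "q \<in> B" "B \<subseteq> V" "card B = Suc k"
      "2 * (\<Sum>x\<in>B. H x) \<le> inner_weight m B - 2 * int (card B)"
      by auto
    have finB: "finite B" using B(2) fin finite_subset by blast
    have "B \<noteq> V" using B(3) Suc.prems by auto
    then have "V - B \<subseteq> V - {q}" "V - B \<noteq> {}" using B(1,2) by auto
    then obtain x where x: "x \<in> V - B" "H x < out_weight V m (V - B) x"
      using H(1) unfolding reduced_def by blast
    have "out_weight V m (V - B) x = (\<Sum>y\<in>B. int (m x y))"
      unfolding out_weight_def using B(2) by (simp add: Diff_Diff_Int Int_absorb1)
    then have "2 * (\<Sum>z\<in>insert x B. H z) \<le> inner_weight m (insert x B) - 2 * int (card (insert x B))"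
      using B(4) x finB by (simp add: inner_weight_insert[OF G])
    moreover have "card (insert x B) = Suc (Suc k)" using B(3) x(1) finB by simp
    ultimately show ?case using B(1,2) x(1) by (intro exI[of _ "insert x B"]) simp
  qed
  moreover have "card V \<noteq> 0" using q fin by auto
  then have "Suc (card V - 1) = card V" by simp
  ultimately obtain B where B: "B \<subseteq> V" "card B = card V"
      "2 * (\<Sum>x\<in>B. H x) \<le> inner_weight m B - 2 * int (card B)"
    by (metis order_refl)
  have "B = V" using card_subset_eq[OF fin B(1,2)] .
  with B(3) have "2 * deg V H \<le> inner_weight m V - 2 * int (card V)" unfolding deg_def by simp
  then show ?thesis
    using inner_weight_eq_twice_num_edges[OF G] unfolding genus_def by linarith
qed

lemma inj_on_firing:
  assumes G: "graph V m" and q: "q \<in> V"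
  shows "inj_on (\<lambda>f x. D x - lap V m f x) {f. f q = 0 \<and> (\<forall>x. x \<notin> V \<longrightarrow> f x = 0)}"
proof (rule inj_onI)
  fix f1 f2 assume f: "f1 \<in> {f. f q = 0 \<and> (\<forall>x. x \<notin> V \<longrightarrow> f x = 0)}"
    "f2 \<in> {f. f q = 0 \<and> (\<forall>x. x \<notin> V \<longrightarrow> f x = 0)}"
    and eq: "(\<lambda>x. D x - lap V m f1 x) = (\<lambda>x. D x - lap V m f2 x)"
  have "lap V m (\<lambda>x. f1 x - f2 x) x = 0" for x
    using fun_cong[OF eq, of x] unfolding lap_diff by simp
  then have diff: "f1 x - f2 x = f1 q - f2 q" if "x \<in> V" for x
    using harmonic_imp_const[OF G _ that q] by blast
  show "f1 = f2"
  proof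
    fix x
    show "f1 x = f2 x" using diff[of x] f by (cases "x \<in> V") simp_all
  qed
qed

lemma bounds_if_nonneg_outside:
  fixes H :: "'v \<Rightarrow> int"
  assumes fin: "finite V" and q: "q \<in> V" and nonneg: "\<And>y. y \<in> V - {q} \<Longrightarrow> 0 \<le> H y"
    and low: "c \<le> H q" and x: "x \<in> V"
  shows "H x \<in> {min 0 c..\<bar>deg V H\<bar> + \<bar>c\<bar>}"
proof -
  have sum: "H q + (\<Sum>y\<in>V - {q}. H y) = deg V H"
    using sum.remove[OF fin q, of H] unfolding deg_def by simp
  have rest_nonneg: "0 \<le> (\<Sum>y\<in>V - {q}. H y)" using nonneg by (intro sum_nonneg) blast
  show ?thesis
  proof (cases "x = q")
    case True
    then show ?thesis using low sum rest_nonneg by auto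
  next
    case False
    then have "x \<in> V - {q}" using x by blast
    then have "0 \<le> H x" "H x \<le> (\<Sum>y\<in>V - {q}. H y)"
      using nonneg fin by (auto intro!: member_le_sum)
    then show ?thesis using low sum by auto
  qed
qed

lemma finite_nonneg_firings:
  assumes G: "graph V m" and q: "q \<in> V" and D: "divisor V D"
  shows "finite {f. f q = 0 \<and> (\<forall>x. 0 \<le> f x \<and> (x \<notin> V \<longrightarrow> f x = 0))
    \<and> (\<forall>x\<in>V - {q}. 0 \<le> D x - lap V m f x)}" (is "finite ?Phi")
proof -
  have fin: "finite V" using graph_finite[OF G] .
  define fire where "fire f = (\<lambda>x. D x - lap V m f x)" for f
  define lo where "lo = min 0 (D q)"
  define hi where "hi = \<bar>deg V D\<bar> + \<bar>D q\<bar>"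
  have "fire f \<in> {H. \<forall>x. (x \<in> V \<longrightarrow> H x \<in> {lo..hi}) \<and> (x \<notin> V \<longrightarrow> H x = 0)}"
    if f: "f \<in> ?Phi" for f
  proof -
    have "lap V m f q \<le> 0"
      unfolding lap_def using q f by (simp add: sum_nonpos)
    moreover have "deg V (fire f) = deg V D"
      unfolding fire_def deg_def by (simp add: sum_subtractf sum_lap_eq_0[OF G])
    ultimately have "fire f x \<in> {lo..hi}" if "x \<in> V" for x
      using bounds_if_nonneg_outside[OF fin q, of "fire f" "D q" x] f that
      unfolding lo_def hi_def fire_def by simp
    moreover have "fire f x = 0" if "x \<notin> V" for x
      using D that unfolding fire_def divisor_def by (simp add: lap_outside)
    ultimately show ?thesis by blast
  qed
  then have "fire ` ?Phi \<subseteq> {H. \<forall>x. (x \<in> V \<longrightarrow> H x \<in> {lo..hi}) \<and> (x \<notin> V \<longrightarrow> H x = 0)}"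
    by blast
  moreover have "finite {H :: 'a \<Rightarrow> int. \<forall>x. (x \<in> V \<longrightarrow> H x \<in> {lo..hi}) \<and> (x \<notin> V \<longrightarrow> H x = 0)}"
    using finite_set_of_finite_funs[OF fin, of "{lo..hi}" 0] by simp
  ultimately have "finite (fire ` ?Phi)" by (rule finite_subset)
  moreover have "inj_on fire ?Phi"
    using inj_on_firing[OF G q, of D] unfolding fire_def by (rule inj_on_subset) blast
  ultimately show ?thesis by (rule finite_imageD)
qed

text \<open>A reduced representative is reached by firing from \<open>V - {q}\<close> as often as possible
  while keeping \<open>V - {q}\<close> out of debt; finiteness makes "as often as possible" meaningful.\<close>
lemma exists_lin_equiv_reduced:
  assumes G: "graph V m" and q: "q \<in> V" and D: "divisor V D"
  shows "\<exists>H. lin_equiv V m D H \<and> reduced V m q H"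
proof -
  have fin: "finite V" using graph_finite[OF G] .
  obtain D0 where D0: "lin_equiv V m D D0" "\<forall>x\<in>V - {q}. 0 \<le> D0 x"
    using lin_equiv_nonneg_outside[OF G q] by blast
  define Phi where "Phi = {f. f q = 0 \<and> (\<forall>x. 0 \<le> f x \<and> (x \<notin> V \<longrightarrow> f x = 0))
    \<and> (\<forall>x\<in>V - {q}. 0 \<le> D0 x - lap V m f x)}"
  have "finite Phi"
    unfolding Phi_def by (rule finite_nonneg_firings[OF G q lin_equiv_divisor[OF D D0(1)]])
  moreover have "(\<lambda>x. 0) \<in> Phi" unfolding Phi_def using D0(2) by (simp add: lap_zero)
  ultimately obtain f where f: "f \<in> Phi" and fmax: "\<And>f'. f' \<in> Phi \<Longrightarrow> sum f' V \<le> sum f V"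
    using obtain_max_point[of Phi "\<lambda>f. sum f V"] by blast
  define H where "H = (\<lambda>x. D0 x - lap V m f x)"
  have "lin_equiv V m D H" unfolding H_def using D0(1) lin_equiv_firing lin_equiv_trans by blast
  moreover have "reduced V m q H"
    unfolding reduced_def
  proof (intro conjI allI impI)
    show "\<forall>x\<in>V - {q}. 0 \<le> H x" using f unfolding Phi_def H_def by blast
  next
    fix A assume A: "A \<subseteq> V - {q}" "A \<noteq> {}"
    show "\<exists>x\<in>A. H x < out_weight V m A x"
    proof (rule ccontr)
      assume legal: "\<not> ?thesis"
      define ind where "ind = (\<lambda>y. if y \<in> A then 1 else 0 :: int)"
      have AV: "A \<subseteq> V" using A(1) by blast
      have "(\<lambda>x. f x + ind x) \<in> Phi"
        unfolding Phi_def
      proof (intro CollectI conjI allI impI ballI)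
        fix x assume x: "x \<in> V - {q}"
        have "0 \<le> H x - lap V m ind x"
          unfolding ind_def
          by (rule set_firing_keeps_nonneg[OF fin AV]) (use x legal f in \<open>auto simp: Phi_def H_def\<close>)
        then show "0 \<le> D0 x - lap V m (\<lambda>x. f x + ind x) x"
          unfolding H_def lap_add by simp
      qed (use f A in \<open>auto simp: Phi_def ind_def\<close>)
      then have "sum (\<lambda>x. f x + ind x) V \<le> sum f V" by (rule fmax)
      moreover have "sum (\<lambda>x. f x + ind x) V = sum f V + int (card A)"
        using AV fin unfolding ind_def by (simp add: sum.distrib sum.If_cases Int_absorb1)
      moreover have "0 < card A" using AV A(2) fin finite_subset by (auto simp: card_gt_0_iff)
      ultimately show False by simp
    qed
  qed
  ultimately show ?thesis by blast
qed

lemma equiv_eff_if_genus_le_deg: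
  assumes G: "graph V m" and D: "divisor V D" and "genus V m \<le> deg V D"
  shows "equiv_eff V m D"
proof -
  obtain q where q: "q \<in> V" using graph_nonempty[OF G] by blast
  obtain H where H: "lin_equiv V m D H" "reduced V m q H"
    using exists_lin_equiv_reduced[OF G q D] by blast
  have HD: "divisor V H" using lin_equiv_divisor[OF D H(1)] .
  have "\<not> H q < 0"
  proof
    assume "H q < 0"
    then have "deg V H < genus V m" by (rule deg_lt_genus_if_reduced[OF G q H(2)])
    then show False using lin_equiv_deg[OF G H(1)] assms(3) by simp
  qed
  have "effective H"
    unfolding effective_def
  proof
    fix x
    show "0 \<le> H x"
    proof (cases "x \<in> V - {q}")
      case True
      then show ?thesis using H(2) unfolding reduced_def by blast
    next
      case False
      then show ?thesis using \<open>\<not> H q < 0\<close> HD unfolding divisor_def by auto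
    qed
  qed
  then show ?thesis unfolding equiv_eff_def using H(1) HD by blast
qed

lemma not_equiv_eff_if_no_legal_firing:
  assumes G: "graph V m"
    and no_legal: "\<And>A. A \<subseteq> V \<Longrightarrow> A \<noteq> {} \<Longrightarrow> \<exists>x\<in>A. N x < out_weight V m A x"
  shows "\<not> equiv_eff V m N"
proof
  assume "equiv_eff V m N"
  then obtain F f where F: "effective F" "\<And>x. F x = N x - lap V m f x"
    unfolding equiv_eff_def lin_equiv_def by blast
  have fin: "finite V" using graph_finite[OF G] .
  obtain z where z: "z \<in> V" "\<And>y. y \<in> V \<Longrightarrow> f y \<le> f z"
    using obtain_max_point[OF fin graph_nonempty[OF G]] by blast
  let ?A = "{y \<in> V. f y = f z}"
  obtain x where x: "x \<in> ?A" "N x < out_weight V m ?A x" using no_legal[of ?A] z(1) by blast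
  have fx: "f x = f z" using x(1) by simp
  have "out_weight V m {y \<in> V. f y = f x} x \<le> lap V m f x"
    by (rule out_weight_le_lap_at_max[OF fin]) (use x(1) z fx in auto)
  then have "F x < 0" using x(2) F(2)[of x] fx by simp
  then show False using F(1) unfolding effective_def by (meson not_less)
qed

lemma inner_weight_eq_twice_earlier_edges:
  fixes h :: "'a \<Rightarrow> 'b::linorder"
  assumes G: "graph V m" and inj: "inj_on h V"
  shows "inner_weight m V = 2 * (\<Sum>x\<in>V. \<Sum>y\<in>V. if h y < h x then int (m x y) else 0)"
proof -
  have split: "int (m x y) = (if h y < h x then int (m x y) else 0) + (if h x < h y then int (m x y) else 0)"
    if "x \<in> V" "y \<in> V" for x y
    using inj_onD[OF inj _ that] graph_loopless[OF G] by (cases "h x = h y") auto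
  have "inner_weight m V = (\<Sum>x\<in>V. \<Sum>y\<in>V. if h y < h x then int (m x y) else 0)
      + (\<Sum>x\<in>V. \<Sum>y\<in>V. if h x < h y then int (m x y) else 0)"
    unfolding inner_weight_def sum.distrib[symmetric]
    by (intro sum.cong refl) (use split in \<open>simp add: sum.distrib[symmetric]\<close>)
  also have "(\<Sum>x\<in>V. \<Sum>y\<in>V. if h x < h y then int (m x y) else 0)
      = (\<Sum>y\<in>V. \<Sum>x\<in>V. if h x < h y then int (m x y) else 0)"
    by (rule sum.swap)
  also have "\<dots> = (\<Sum>x\<in>V. \<Sum>y\<in>V. if h y < h x then int (m x y) else 0)"
    by (intro sum.cong refl) (metis graph_sym[OF G])
  finally show ?thesis by simp
qed

text \<open>The divisor of an acyclic orientation minus \<open>1\<close> at every vertex: order the vertices by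
  an injection \<open>h\<close> and let \<open>T x\<close> count the edges from earlier vertices to \<open>x\<close>.\<close>
lemma exists_not_equiv_eff_deg_genus_minus_1:
  assumes G: "graph V m"
  shows "\<exists>N. divisor V N \<and> deg V N = genus V m - 1 \<and> \<not> equiv_eff V m N"
proof -
  have fin: "finite V" using graph_finite[OF G] .
  obtain h :: "'a \<Rightarrow> nat" where inj: "inj_on h V"
    using finite_imp_inj_to_nat_seg[OF fin] by blast
  define T where "T x = (\<Sum>y\<in>V. if h y < h x then int (m x y) else 0)" for x
  define N where "N = (\<lambda>x. if x \<in> V then T x - 1 else 0)"
  have "\<not> equiv_eff V m N"
  proof (rule not_equiv_eff_if_no_legal_firing[OF G])
    fix A assume A: "A \<subseteq> V" "A \<noteq> {}"
    moreover have "finite A" using A(1) fin finite_subset by blast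
    ultimately obtain x where x: "x \<in> A" "\<And>y. y \<in> A \<Longrightarrow> - int (h y) \<le> - int (h x)"
      using obtain_max_point[of A "\<lambda>y. - int (h y)"] by blast
    have "T x \<le> (\<Sum>y\<in>V. if y \<in> A then 0 else int (m x y))"
      unfolding T_def by (rule sum_mono) (use x(2) in force)
    also have "\<dots> = out_weight V m A x"
      unfolding out_weight_def using fin by (simp add: sum.If_cases Diff_eq)
    finally have "N x < out_weight V m A x" using x(1) A(1) unfolding N_def by auto
    then show "\<exists>x\<in>A. N x < out_weight V m A x" using x(1) by blast
  qed
  moreover have "inner_weight m V = 2 * (\<Sum>x\<in>V. T x)"
    unfolding T_def by (rule inner_weight_eq_twice_earlier_edges[OF G inj])
  then have "deg V N = genus V m - 1"
    using inner_weight_eq_twice_num_edges[OF G]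
    unfolding deg_def N_def genus_def by (simp add: sum_subtractf)
  moreover have "divisor V N" unfolding divisor_def N_def by simp
  ultimately show ?thesis by blast
qed

lemma genus_nonneg:
  assumes G: "graph V m"
  shows "0 \<le> genus V m"
proof (rule ccontr)
  assume "\<not> 0 \<le> genus V m"
  obtain q where q: "q \<in> V" using graph_nonempty[OF G] by blast
  have deg: "deg V (\<lambda>x. - vtx q x) = -1"
    unfolding deg_def vtx_def using graph_finite[OF G] q by (simp add: sum_negf)
  moreover have "divisor V (\<lambda>x. - vtx q x)" unfolding divisor_def vtx_def using q by auto
  ultimately have "equiv_eff V m (\<lambda>x. - vtx q x)"
    using equiv_eff_if_genus_le_deg[OF G] \<open>\<not> 0 \<le> genus V m\<close> by simp
  then show False using deg_nonneg_if_equiv_eff[OF G] deg by fastforce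
qed

lemma rank_eq_minus_1_if_deg_neg:
  assumes "graph V m" "deg V D < 0"
  shows "rank V m D = -1"
  using deg_nonneg_if_equiv_eff[OF assms(1)] assms(2) unfolding rank_def by (meson not_le)

text \<open>The non-effective divisor \<open>N\<close> of degree \<open>g - 1\<close> is an obstruction: \<open>D - N\<close> is
  equivalent to an effective \<open>F\<close>, and for \<open>E = F + c q\<close> the divisor \<open>D - E + c q\<close> is
  equivalent to \<open>N\<close>.\<close>
lemma exists_effective_diff_not_equiv_eff:
  assumes G: "graph V m" and D: "divisor V D"
    and "2 * genus V m - 1 \<le> deg V D" and r: "deg V D - genus V m < r"
  shows "\<exists>E. divisor V E \<and> effective E \<and> deg V E = r \<and> \<not> equiv_eff V m (\<lambda>x. D x - E x)"
proof -
  obtain N where N: "divisor V N" "deg V N = genus V m - 1" "\<not> equiv_eff V m N"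
    using exists_not_equiv_eff_deg_genus_minus_1[OF G] by blast
  have "equiv_eff V m (\<lambda>x. D x - N x)"
    using equiv_eff_if_genus_le_deg[OF G divisor_diff[OF D N(1)]] N(2) assms(3)
    by (simp add: deg_diff)
  then obtain F f where F: "divisor V F" "effective F" "\<And>x. F x = D x - N x - lap V m f x"
    unfolding equiv_eff_def lin_equiv_def by blast
  obtain q where q: "q \<in> V" using graph_nonempty[OF G] by blast
  define c where "c = r - deg V F"
  have "lin_equiv V m (\<lambda>x. D x - N x) F" unfolding lin_equiv_def using F(3) by blast
  then have "deg V F = deg V D - genus V m + 1"
    using lin_equiv_deg[OF G] N(2) by (simp add: deg_diff)
  then have c: "0 \<le> c" using r unfolding c_def by simp
  have cq: "divisor V (\<lambda>x. c * vtx q x)" "effective (\<lambda>x. c * vtx q x)"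
    using q c unfolding divisor_def effective_def vtx_def by auto
  define E where "E = (\<lambda>x. F x + c * vtx q x)"
  have "deg V E = r"
    unfolding E_def deg_add c_def deg_def vtx_def using graph_finite[OF G] q
    by (simp add: sum_distrib_left[symmetric])
  moreover have "divisor V E" "effective E"
    using F(1,2) cq unfolding E_def divisor_def effective_def by auto
  moreover have "\<not> equiv_eff V m (\<lambda>x. D x - E x)"
  proof
    assume "equiv_eff V m (\<lambda>x. D x - E x)"
    then have "equiv_eff V m (\<lambda>x. (D x - E x) + c * vtx q x)"
      using equiv_eff_add_effective cq by blast
    moreover have "(\<lambda>x. (D x - E x) + c * vtx q x) = (\<lambda>x. N x - lap V m (\<lambda>x. - f x) x)"
      unfolding E_def using F(3) by (simp add: lap_uminus)
    ultimately have "equiv_eff V m (\<lambda>x. N x - lap V m (\<lambda>x. - f x) x)" by simp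
    then show False using N(3) equiv_eff_if_lin_equiv[OF lin_equiv_firing] by blast
  qed
  ultimately show ?thesis by blast
qed

lemma rank_eq_deg_minus_genus:
  assumes G: "graph V m" and D: "divisor V D" and big: "2 * genus V m \<le> deg V D"
  shows "rank V m D = deg V D - genus V m"
proof -
  let ?P = "\<lambda>r::int. 0 \<le> r \<and> (\<forall>E. divisor V E \<and> effective E \<and> deg V E = r
    \<longrightarrow> equiv_eff V m (\<lambda>x. D x - E x))"
  have g: "0 \<le> genus V m" using genus_nonneg[OF G] .
  have "?P (deg V D - genus V m)"
    using big g equiv_eff_if_genus_le_deg[OF G divisor_diff[OF D]] by (auto simp: deg_diff)
  moreover have "r \<le> deg V D - genus V m" if r: "?P r" for r
  proof (rule ccontr)
    assume "\<not> r \<le> deg V D - genus V m"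
    then obtain E where "divisor V E" "effective E" "deg V E = r" "\<not> equiv_eff V m (\<lambda>x. D x - E x)"
      using exists_effective_diff_not_equiv_eff[OF G D, of r] big by auto
    then show False using r by blast
  qed
  ultimately have "(GREATEST r. ?P r) = deg V D - genus V m" by (rule Greatest_equality)
  moreover have "equiv_eff V m D" using equiv_eff_if_genus_le_deg[OF G D] big g by simp
  ultimately show ?thesis unfolding rank_def by simp
qed

section \<open>The transmission permutation\<close>

lemma sum_atLeastAtMost_int_telescope:
  fixes h :: "int \<Rightarrow> int"
  assumes "A - 1 \<le> B"
  shows "(\<Sum>a\<in>{A..B}. h a - h (a - 1)) = h B - h (A - 1)"
proof -
  obtain k where B: "B = A - 1 + int k" using assms zle_iff_zadd by blast
  have "(\<Sum>a\<in>{A..A - 1 + int k}. h a - h (a - 1)) = h (A - 1 + int k) - h (A - 1)"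
  proof (induction k)
    case (Suc k)
    have "{A..A - 1 + int (Suc k)} = insert (A + int k) {A..A - 1 + int k}" by auto
    then show ?case using Suc by (simp add: diff_add_eq)
  qed simp
  then show ?thesis using B by simp
qed

lemma unique_one_if_nonneg_sum_eq_1:
  fixes h :: "'a \<Rightarrow> int"
  assumes "finite I" "\<And>i. 0 \<le> h i" "\<And>i. i \<notin> I \<Longrightarrow> h i = 0" "(\<Sum>i\<in>I. h i) = 1"
  shows "\<exists>i. h i = 1 \<and> (\<forall>j. j \<noteq> i \<longrightarrow> h j = 0)"
proof -
  have "\<exists>i\<in>I. h i \<noteq> 0"
  proof (rule ccontr)
    assume "\<not> (\<exists>i\<in>I. h i \<noteq> 0)"
    then have "(\<Sum>i\<in>I. h i) = 0" by simp
    then show False using assms(4) by simp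
  qed
  then obtain i where i: "i \<in> I" "h i \<noteq> 0" by blast
  have split: "(\<Sum>j\<in>I. h j) = h i + (\<Sum>j\<in>I - {i}. h j)" using sum.remove[OF assms(1) i(1)] .
  moreover have "0 \<le> (\<Sum>j\<in>I - {i}. h j)" using assms(2) by (simp add: sum_nonneg)
  ultimately have "h i = 1" using assms(2)[of i] i(2) assms(4) by linarith
  then have "(\<Sum>j\<in>I - {i}. h j) = 0" using split assms(4) by simp
  then have "\<forall>j\<in>I - {i}. h j = 0" using sum_nonneg_eq_0_iff[of "I - {i}" h] assms(1,2) by blast
  then show ?thesis using \<open>h i = 1\<close> assms(3) by blast
qed

lemma succ_invariant_imp_const:
  fixes \<phi> :: "int \<Rightarrow> 'a"
  assumes "\<And>a. \<phi> (a + 1) = \<phi> a"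
  shows "\<phi> a = \<phi> b"
proof (induction a rule: int_induct[where k = b])
  case (step2 i)
  then show ?case using assms[of "i - 1"] by simp
qed (use assms in simp_all)

locale submodular_marked_graph =
  fixes V :: "'v set" and m :: "'v \<Rightarrow> 'v \<Rightarrow> nat" and u v :: 'v and D :: "'v \<Rightarrow> int"
  assumes graph: "graph V m" and u_in_V: "u \<in> V" and v_in_V: "v \<in> V"
    and divisor_D: "divisor V D" and submodular_D: "submodular V m u v D"
begin

abbreviation "d \<equiv> deg V D"
abbreviation "g \<equiv> genus V m"
abbreviation "\<tau> \<equiv> transmission_perm V m u v D"

text \<open>\<open>R a b = r(D + a u - b v)\<close>; the sign of \<open>b\<close> follows the indexing of \<open>\<tau>\<close>.\<close>
definition R :: "int \<Rightarrow> int \<Rightarrow> int" where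
  "R a b = rank V m (twist D u v a (- b))"

definition \<Delta> :: "int \<Rightarrow> int \<Rightarrow> int" where
  "\<Delta> a b = Delta V m u v (twist D u v a (- b))"

lemma g_nonneg: "0 \<le> g"
  using genus_nonneg[OF graph] .

lemma R_eq_minus_1: "d + a - b < 0 \<Longrightarrow> R a b = -1"
  unfolding R_def
  by (rule rank_eq_minus_1_if_deg_neg[OF graph]) (simp add: deg_twist[OF graph_finite[OF graph] u_in_V v_in_V])

lemma R_eq_affine: "2 * g \<le> d + a - b \<Longrightarrow> R a b = d + a - b - g"
  unfolding R_def
  using rank_eq_deg_minus_genus[OF graph divisor_twist[OF divisor_D u_in_V v_in_V]]
    deg_twist[OF graph_finite[OF graph] u_in_V v_in_V]
  by simp

lemma \<Delta>_eq: "\<Delta> a b = R a b - R (a - 1) b - R a (b + 1) + R (a - 1) (b + 1)"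
  unfolding \<Delta>_def R_def Delta_def twist_twist by (simp add: algebra_simps)

lemma \<Delta>_nonneg: "0 \<le> \<Delta> a b"
  using submodular_D unfolding submodular_def \<Delta>_def by blast

lemma \<Delta>_eq_0_outside_band: "d + a - b < 0 \<or> 2 * g + 2 \<le> d + a - b \<Longrightarrow> \<Delta> a b = 0"
  unfolding \<Delta>_eq using R_eq_minus_1 R_eq_affine by auto

lemma \<Delta>_column_sum: "(\<Sum>a\<in>{b - d..b - d + 2 * g + 1}. \<Delta> a b) = 1"
proof -
  let ?h = "\<lambda>a. R a b - R a (b + 1)"
  have "(\<Sum>a\<in>{b - d..b - d + 2 * g + 1}. \<Delta> a b) = (\<Sum>a\<in>{b - d..b - d + 2 * g + 1}. ?h a - ?h (a - 1))"
    unfolding \<Delta>_eq by (simp add: algebra_simps)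
  also have "\<dots> = ?h (b - d + 2 * g + 1) - ?h (b - d - 1)"
    using g_nonneg by (intro sum_atLeastAtMost_int_telescope) simp
  also have "\<dots> = 1" using g_nonneg R_eq_minus_1 R_eq_affine by simp
  finally show ?thesis .
qed

lemma \<Delta>_row_sum: "(\<Sum>b\<in>{a + d - 2 * g - 1..a + d}. \<Delta> a b) = 1"
proof -
  let ?h = "\<lambda>b. R (a - 1) (b + 1) - R a (b + 1)"
  have "(\<Sum>b\<in>{a + d - 2 * g - 1..a + d}. \<Delta> a b) = (\<Sum>b\<in>{a + d - 2 * g - 1..a + d}. ?h b - ?h (b - 1))"
    unfolding \<Delta>_eq by (simp add: algebra_simps)
  also have "\<dots> = ?h (a + d) - ?h (a + d - 2 * g - 2)"
    using g_nonneg by (subst sum_atLeastAtMost_int_telescope) (simp_all add: algebra_simps)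
  also have "\<dots> = 1" using g_nonneg R_eq_minus_1 R_eq_affine by simp
  finally show ?thesis .
qed

lemma \<Delta>_column_unique: "\<exists>a. \<Delta> a b = 1 \<and> (\<forall>a'. a' \<noteq> a \<longrightarrow> \<Delta> a' b = 0)"
proof (rule unique_one_if_nonneg_sum_eq_1[OF _ \<Delta>_nonneg _ \<Delta>_column_sum])
  fix a assume "a \<notin> {b - d..b - d + 2 * g + 1}"
  then have "a < b - d \<or> b - d + 2 * g + 1 < a" by auto
  then show "\<Delta> a b = 0" by (intro \<Delta>_eq_0_outside_band) arith
qed simp

lemma \<Delta>_row_unique: "\<exists>b. \<Delta> a b = 1 \<and> (\<forall>b'. b' \<noteq> b \<longrightarrow> \<Delta> a b' = 0)"
proof (rule unique_one_if_nonneg_sum_eq_1[OF _ \<Delta>_nonneg _ \<Delta>_row_sum])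
  fix b assume "b \<notin> {a + d - 2 * g - 1..a + d}"
  then have "b < a + d - 2 * g - 1 \<or> a + d < b" by auto
  then show "\<Delta> a b = 0" by (intro \<Delta>_eq_0_outside_band) arith
qed simp

lemma \<Delta>_permutation_matrix: "\<exists>!\<sigma>. bij \<sigma> \<and> (\<forall>a b. \<Delta> a b = (if \<sigma> b = a then 1 else 0))"
proof -
  have "\<exists>\<sigma>. \<forall>b. \<Delta> (\<sigma> b) b = 1 \<and> (\<forall>a. a \<noteq> \<sigma> b \<longrightarrow> \<Delta> a b = 0)"
    using \<Delta>_column_unique by (intro choice) blast
  then obtain \<sigma> where "\<forall>b. \<Delta> (\<sigma> b) b = 1 \<and> (\<forall>a. a \<noteq> \<sigma> b \<longrightarrow> \<Delta> a b = 0)" ..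
  then have \<Delta>_\<sigma>: "\<Delta> a b = (if \<sigma> b = a then 1 else 0)" for a b by (cases "\<sigma> b = a") auto
  have "inj \<sigma>"
  proof (rule injI)
    fix b1 b2 assume "\<sigma> b1 = \<sigma> b2"
    then have "\<Delta> (\<sigma> b1) b1 = 1" "\<Delta> (\<sigma> b1) b2 = 1" using \<Delta>_\<sigma> by simp_all
    obtain b where "\<forall>b'. b' \<noteq> b \<longrightarrow> \<Delta> (\<sigma> b1) b' = 0"
      using \<Delta>_row_unique by blast
    with \<open>\<Delta> (\<sigma> b1) b1 = 1\<close> \<open>\<Delta> (\<sigma> b1) b2 = 1\<close> show "b1 = b2" by (metis zero_neq_one)
  qed
  moreover have "surj \<sigma>"
  proof -
    have "a \<in> range \<sigma>" for a
    proof -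
      obtain b where "\<Delta> a b = 1" using \<Delta>_row_unique by blast
      then have "\<sigma> b = a" using \<Delta>_\<sigma>[of a b] by (simp split: if_splits)
      then show ?thesis by blast
    qed
    then show ?thesis by blast
  qed
  ultimately have "bij \<sigma>" by (rule bijI)
  show ?thesis
  proof (rule ex1I[of _ \<sigma>])
    show "bij \<sigma> \<and> (\<forall>a b. \<Delta> a b = (if \<sigma> b = a then 1 else 0))"
      using \<open>bij \<sigma>\<close> \<Delta>_\<sigma> by blast
  next
    fix \<sigma>' assume \<sigma>': "bij \<sigma>' \<and> (\<forall>a b. \<Delta> a b = (if \<sigma>' b = a then 1 else 0))"
    show "\<sigma>' = \<sigma>"
    proof
      fix b
      have "\<Delta> (\<sigma>' b) b = 1" using \<sigma>' by simp
      then show "\<sigma>' b = \<sigma> b" using \<Delta>_\<sigma>[of "\<sigma>' b" b] by (simp split: if_splits)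
    qed
  qed
qed

lemma \<Delta>_transmission_perm: "\<Delta> a b = (if \<tau> b = a then 1 else 0)"
proof -
  have \<tau>: "\<tau> = (THE \<sigma>. bij \<sigma> \<and> (\<forall>a b. \<Delta> a b = (if \<sigma> b = a then 1 else 0)))"
    unfolding transmission_perm_def \<Delta>_def ..
  have "bij \<tau> \<and> (\<forall>a b. \<Delta> a b = (if \<tau> b = a then 1 else 0))"
    unfolding \<tau> by (rule theI'[OF \<Delta>_permutation_matrix])
  then show ?thesis by blast
qed

lemma transmission_perm_ge: "b - d \<le> \<tau> b"
proof (rule ccontr)
  assume "\<not> b - d \<le> \<tau> b"
  then have "\<Delta> (\<tau> b) b = 0" by (intro \<Delta>_eq_0_outside_band) simp
  then show False using \<Delta>_transmission_perm[of "\<tau> b" b] by simp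
qed

text \<open>Column \<open>b\<close> of the mixed differences has its single \<open>1\<close> in row \<open>\<tau> b\<close>, so summing
  it from below the band shows that \<open>R \<cdot> b - R \<cdot> (b + 1)\<close> jumps from \<open>0\<close> to \<open>1\<close> at \<open>\<tau> b\<close>.\<close>
lemma R_column_step: "R a b - R a (b + 1) = (if \<tau> b \<le> a then 1 else 0)"
proof -
  define \<phi> where "\<phi> a = R a b - R a (b + 1) - (if \<tau> b \<le> a then 1 else 0)" for a
  have "\<phi> (a + 1) = \<phi> a" for a
    using \<Delta>_eq[of "a + 1" b] \<Delta>_transmission_perm[of "a + 1" b] unfolding \<phi>_def
    by (simp split: if_splits)
  then have "\<phi> a = \<phi> (b - d - 1)" by (rule succ_invariant_imp_const)
  moreover have "\<phi> (b - d - 1) = 0"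
    unfolding \<phi>_def using R_eq_minus_1 transmission_perm_ge[of b] by simp
  ultimately have "\<phi> a = 0" by simp
  then show ?thesis unfolding \<phi>_def by simp
qed

section \<open>The Weierstrass partition\<close>

abbreviation \<rho> :: "int \<Rightarrow> int" where
  "\<rho> b \<equiv> R 0 b"

lemma \<rho>_step: "\<rho> b - \<rho> (b + 1) = (if \<tau> b \<le> 0 then 1 else 0)"
  using R_column_step[of 0 b] .

lemma \<rho>_antimono: "b \<le> b' \<Longrightarrow> \<rho> b' \<le> \<rho> b"
proof (induction b' rule: int_ge_induct)
  case (step i)
  then show ?case using \<rho>_step[of i] by (simp split: if_splits)
qed simp

lemma \<rho>_eq_minus_1: "d < b \<Longrightarrow> \<rho> b = -1"
  using R_eq_minus_1 by simp

lemma \<rho>_eq_affine: "b \<le> d - 2 * g \<Longrightarrow> \<rho> b = d - b - g"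
  using R_eq_affine by simp

lemma \<rho>_ge_minus_1: "-1 \<le> \<rho> b"
  using \<rho>_antimono[of b "max b (d + 1)"] \<rho>_eq_minus_1[of "max b (d + 1)"] by simp

lemma transmission_perm_nonpos_below: "b < d - 2 * g \<Longrightarrow> \<tau> b \<le> 0"
  using \<rho>_step[of b] \<rho>_eq_affine[of b] \<rho>_eq_affine[of "b + 1"] by (simp split: if_splits)

lemma transmission_perm_pos_above: "d < b \<Longrightarrow> 0 < \<tau> b"
  using \<rho>_step[of b] \<rho>_eq_minus_1[of b] \<rho>_eq_minus_1[of "b + 1"] by (simp split: if_splits)

lemma \<rho>_inj_on_drops:
  assumes "\<tau> y1 \<le> 0" "\<tau> y2 \<le> 0" "\<rho> y1 = \<rho> y2"
  shows "y1 = y2"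
proof -
  have False if "\<tau> a \<le> 0" "a < b" "\<rho> a = \<rho> b" for a b
    using \<rho>_antimono[of "a + 1" b] \<rho>_step[of a] that by simp
  then show ?thesis using assms by (metis linorder_neqE)
qed

lemma exists_drop_to: "\<exists>y. \<tau> y \<le> 0 \<and> \<rho> y = int i"
proof -
  define Y where "Y = {y. d - 2 * g - int i \<le> y \<and> int i \<le> \<rho> y}"
  have "Y \<subseteq> {d - 2 * g - int i..d}"
  proof
    fix y assume y: "y \<in> Y"
    have "\<not> d < y"
    proof
      assume "d < y"
      then show False using y \<rho>_eq_minus_1[of y] unfolding Y_def by simp
    qed
    then show "y \<in> {d - 2 * g - int i..d}" using y unfolding Y_def by simp
  qed
  then have "finite Y" by (rule finite_subset) simp
  moreover have "d - 2 * g - int i \<in> Y"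
    unfolding Y_def using \<rho>_eq_affine[of "d - 2 * g - int i"] g_nonneg by simp
  ultimately obtain y where y: "y \<in> Y" "\<And>z. z \<in> Y \<Longrightarrow> z \<le> y"
    using obtain_max_point[of Y id] by auto
  have "\<rho> (y + 1) < int i"
    using y(1) y(2)[of "y + 1"] unfolding Y_def by fastforce
  moreover have "int i \<le> \<rho> y" using y(1) unfolding Y_def by simp
  ultimately show ?thesis using \<rho>_step[of y] by (intro exI[of _ y]) (simp split: if_splits)
qed

text \<open>\<open>- s_i(D,v)\<close> is the unique \<open>y\<close> at which \<open>\<rho>\<close> drops from \<open>i\<close> to \<open>i - 1\<close>.\<close>
lemma s_seq_drop: "\<tau> (- s_seq V m D v i) \<le> 0 \<and> \<rho> (- s_seq V m D v i) = int i"
proof -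
  obtain y where y: "\<tau> y \<le> 0" "\<rho> y = int i" using exists_drop_to by blast
  have rank_shift: "rank V m (\<lambda>x. D x + l * vtx v x) = \<rho> (- l)" for l
    unfolding R_def twist_def by simp
  have "s_seq V m D v i = - y"
    unfolding s_seq_def rank_shift
  proof (rule Least_equality)
    show "int i \<le> \<rho> (- (- y))" using y by simp
  next
    fix l assume l: "int i \<le> \<rho> (- l)"
    show "- y \<le> l"
    proof (rule ccontr)
      assume "\<not> - y \<le> l"
      then have "\<rho> (- l) \<le> \<rho> (y + 1)" by (intro \<rho>_antimono) simp
      then show False using l y \<rho>_step[of y] by simp
    qed
  qed
  then show ?thesis using y by simp
qed

definition pos_before :: "int \<Rightarrow> int set" where
  "pos_before y = {x. x < y \<and> 0 < \<tau> x}"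

lemma pos_before_subset: "pos_before y \<subseteq> {d - 2 * g..<y}"
  unfolding pos_before_def using transmission_perm_nonpos_below by (force simp: not_less)

lemma finite_pos_before: "finite (pos_before y)"
  using pos_before_subset by (rule finite_subset) simp

lemma card_pos_before: "int (card (pos_before y)) = \<rho> y + y + g - d"
proof -
  define \<phi> where "\<phi> y = int (card (pos_before y)) - \<rho> y - y" for y
  have "\<phi> (y + 1) = \<phi> y" for y
  proof (cases "0 < \<tau> y")
    case True
    then have "pos_before (y + 1) = insert y (pos_before y)" "y \<notin> pos_before y"
      unfolding pos_before_def by auto
    then show ?thesis unfolding \<phi>_def using True \<rho>_step[of y] finite_pos_before[of y] by simp
  next
    case False
    then have "pos_before (y + 1) = pos_before y" unfolding pos_before_def by (auto simp: le_less)
    then show ?thesis unfolding \<phi>_def using False \<rho>_step[of y] by simp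
  qed
  then have "\<phi> y = \<phi> (d - 2 * g)" by (rule succ_invariant_imp_const)
  moreover have "pos_before (d - 2 * g) = {}" using pos_before_subset[of "d - 2 * g"] by auto
  ultimately show ?thesis unfolding \<phi>_def using \<rho>_eq_affine[of "d - 2 * g"] by simp
qed

lemma wlambda_eq_card: "wlambda V m D v i = int (card (pos_before (- s_seq V m D v i)))"
  unfolding wlambda_def card_pos_before using s_seq_drop[of i] by simp

text \<open>A sign-changing inversion \<open>(x, y)\<close> is an \<open>x \<in> pos_before y\<close> with \<open>\<tau> y \<le> 0\<close>; grouping
  them by \<open>y = - s_i\<close> gives the parts \<open>\<lambda>_i\<close>.\<close>
definition inversion_ends :: "int set" where
  "inversion_ends = {y. \<tau> y \<le> 0 \<and> pos_before y \<noteq> {}}"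

lemma finite_inversion_ends: "finite inversion_ends"
proof (rule finite_subset)
  show "inversion_ends \<subseteq> {d - 2 * g..d}"
  proof
    fix y assume "y \<in> inversion_ends"
    then obtain x where "x \<in> pos_before y" "\<tau> y \<le> 0" unfolding inversion_ends_def by blast
    then show "y \<in> {d - 2 * g..d}"
      using pos_before_subset[of y] transmission_perm_pos_above[of y] by force
  qed
qed simp

lemma sci_eq_sum_card_pos_before:
  "finite (sci_pairs \<tau>) \<and> int (sci \<tau>) = (\<Sum>y\<in>inversion_ends. int (card (pos_before y)))"
proof -
  have pairs: "sci_pairs \<tau> = (\<lambda>(y, x). (x, y)) ` (SIGMA y:inversion_ends. pos_before y)"
    unfolding sci_pairs_def inversion_ends_def pos_before_def by force
  have fin: "finite (SIGMA y:inversion_ends. pos_before y)"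
    using finite_inversion_ends finite_pos_before by blast
  have "card (sci_pairs \<tau>) = card (SIGMA y:inversion_ends. pos_before y)"
    unfolding pairs by (rule card_image) (auto intro: inj_onI)
  also have "\<dots> = (\<Sum>y\<in>inversion_ends. card (pos_before y))"
    using finite_inversion_ends finite_pos_before by simp
  finally show ?thesis using fin unfolding sci_def pairs by simp
qed

lemma bij_betw_s_seq_inversion_ends:
  "bij_betw (\<lambda>i. - s_seq V m D v i) {i. wlambda V m D v i \<noteq> 0} inversion_ends"
proof (rule bij_betw_imageI)
  show "inj_on (\<lambda>i. - s_seq V m D v i) {i. wlambda V m D v i \<noteq> 0}"
    using s_seq_drop by (intro inj_onI) (metis of_nat_eq_iff)
  show "(\<lambda>i. - s_seq V m D v i) ` {i. wlambda V m D v i \<noteq> 0} = inversion_ends"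
  proof
    show "(\<lambda>i. - s_seq V m D v i) ` {i. wlambda V m D v i \<noteq> 0} \<subseteq> inversion_ends"
      unfolding inversion_ends_def using s_seq_drop wlambda_eq_card by auto
  next
    show "inversion_ends \<subseteq> (\<lambda>i. - s_seq V m D v i) ` {i. wlambda V m D v i \<noteq> 0}"
    proof
      fix y assume y: "y \<in> inversion_ends"
      then have "\<tau> y \<le> 0" unfolding inversion_ends_def by blast
      then have "0 \<le> \<rho> y" using \<rho>_step[of y] \<rho>_ge_minus_1[of "y + 1"] by simp
      then have "\<rho> (- s_seq V m D v (nat (\<rho> y))) = \<rho> y" using s_seq_drop by simp
      then have y_eq: "- s_seq V m D v (nat (\<rho> y)) = y"
        using \<rho>_inj_on_drops s_seq_drop \<open>\<tau> y \<le> 0\<close> by blast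
      then have "wlambda V m D v (nat (\<rho> y)) \<noteq> 0"
        using y finite_pos_before unfolding wlambda_eq_card inversion_ends_def by simp
      then show "y \<in> (\<lambda>i. - s_seq V m D v i) ` {i. wlambda V m D v i \<noteq> 0}"
        using y_eq by force
    qed
  qed
qed

lemma sci_eq_wsize: "finite (sci_pairs \<tau>) \<and> int (sci \<tau>) = wsize V m D v"
proof -
  have "wsize V m D v
      = (\<Sum>i\<in>{i. wlambda V m D v i \<noteq> 0}. int (card (pos_before (- s_seq V m D v i))))"
    unfolding wsize_def by (intro sum.cong refl) (simp add: wlambda_eq_card)
  also have "\<dots> = (\<Sum>y\<in>inversion_ends. int (card (pos_before y)))"
    by (rule sum.reindex_bij_betw[OF bij_betw_s_seq_inversion_ends])
  finally show ?thesis using sci_eq_sum_card_pos_before by simp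
qed

end

theorem mainTheorem17:
  fixes V :: "'v set" and m :: "'v \<Rightarrow> 'v \<Rightarrow> nat" and u v :: 'v and D :: "'v \<Rightarrow> int"
  assumes "graph V m" and "u \<in> V" and "v \<in> V" and "u \<noteq> v"
    and "divisor V D" and "submodular V m u v D"
  shows "finite (sci_pairs (transmission_perm V m u v D))
    \<and> int (sci (transmission_perm V m u v D)) = wsize V m D v"
proof -
  interpret submodular_marked_graph V m u v D
    using assms by unfold_locales
  show ?thesis by (rule sci_eq_wsize)
qed

end
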